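(* Let $\mathcal{H}$ be a complex Hilbert space of finite dimension $n\ge 2$, let $\mathcal{B}(\mathcal{H})_{\mathrm{sa}}$ be the real vector space of selfadjoint operators on $\mathcal{H}$, and for $k\in\mathbb{N}$ let $\mathcal{P}_k(\mathcal{H})$ denote the set of orthogonal projections on $\mathcal{H}$ of rank $k$. Let $k<n$ and let $\mathcal{L}\colon\mathcal{B}(\mathcal{H})_{\mathrm{sa}}\to\mathcal{B}(\mathcal{H})_{\mathrm{sa}}$ be a linear map with $\mathcal{L}(\mathcal{P}_k(\mathcal{H}))=\mathcal{P}_k(\mathcal{H})$. Then $\mathcal{L}$ maps $\mathcal{B}(\mathcal{H})_{\mathrm{sa}}$ bijectively onto itself. *)

theory Defs
  imports "HOL-Analysis.Analysis"
begin

text \<open>Operators on the n-dimensional complex Hilbert space C^n are represented by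
  their matrices w.r.t. the standard orthonormal basis.\<close>

definition cadjoint :: "complex^'n^'n \<Rightarrow> complex^'n^'n" where
  "cadjoint A = (\<chi> i j. cnj (A $ j $ i))"

definition selfadjoints :: "(complex^'n^'n) set" where
  "selfadjoints = {A. cadjoint A = A}"

definition projections_rank :: "nat \<Rightarrow> (complex^'n^'n) set" where
  "projections_rank k = {P. cadjoint P = P \<and> P ** P = P \<and> rank P = k}"

end

theory Submission
  imports Defs
begin

text \<open>The rank-\<open>k\<close> projections span the selfadjoint matrices over \<open>\<real>\<close>. Sums of \<open>k\<close>
  diagonal matrix units are rank-\<open>k\<close> projections, and their differences give every diagonal
  unit. Completing a unit vector \<open>(e\<^sub>i + z e\<^sub>j) / \<surd>2\<close>, \<open>|z| = 1\<close>, by \<open>k - 1\<close> further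
  coordinate vectors gives a rank-\<open>k\<close> projection which, modulo diagonal units, is the selfadjoint
  matrix with entries \<open>z/2\<close> at \<open>(i, j)\<close> and \<open>cnj z / 2\<close> at \<open>(j, i)\<close>; taking \<open>z = 1, \<i>\<close> yields
  all off-diagonal patterns. Hence the image of \<open>L\<close>, a real subspace of the selfadjoints, contains
  all of them: \<open>L\<close> is onto, and a surjective linear endomorphism of a finite-dimensional space
  is injective.\<close>

lemma linear_surjective_on_subspace_imp_inj_on:
  fixes g :: "'a::euclidean_space \<Rightarrow> 'a"
  assumes "linear g" "subspace S" "g ` S = S"
  shows "inj_on g S"
proof -
  obtain B where B: "B \<subseteq> S" "independent B" "S \<subseteq> span B" "card B = dim S"
    by (rule basis_exists)
  have fin: "finite B" using B(2) by (rule independent_imp_finite)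
  have spanB: "span B = S" using B(1,3) assms(2) by (simp add: span_subspace)
  have gB_spans: "S \<subseteq> span (g ` B)"
    using assms(1,3) spanB by (simp add: span_linear_image)
  have gB_sub: "g ` B \<subseteq> S" using B(1) assms(3) by auto
  have "card (g ` B) \<le> card B" using fin by (rule card_image_le)
  moreover have "dim S \<le> card (g ` B)" using gB_spans fin by (intro dim_le_card) auto
  ultimately have card_eq: "card (g ` B) = card B" using B(4) by simp
  have "independent (g ` B)"
    using gB_sub gB_spans fin card_eq B(4) by (intro card_le_dim_spanning[of _ S]) auto
  moreover have "inj_on g B" using fin card_eq by (simp add: inj_on_iff_eq_card)
  ultimately have "inj_on g (span B)"
    using assms(1) by (simp add: linear_inj_on_span_iff_independent_image)
  then show ?thesis by (simp add: spanB)
qed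

lemma cadjoint_add: "cadjoint (A + B) = cadjoint A + cadjoint B"
  by (simp add: cadjoint_def vec_eq_iff)

lemma cadjoint_scaleR: "cadjoint (c *\<^sub>R A) = c *\<^sub>R cadjoint A"
  by (simp add: cadjoint_def vec_eq_iff)

lemma cadjoint_cadjoint [simp]: "cadjoint (cadjoint A) = A"
  by (simp add: cadjoint_def vec_eq_iff)

lemma subspace_selfadjoints: "subspace selfadjoints"
  unfolding subspace_def selfadjoints_def
  by (auto simp: cadjoint_add cadjoint_scaleR cadjoint_def vec_eq_iff)

lemma projections_rank_subset_selfadjoints: "projections_rank k \<subseteq> selfadjoints"
  by (auto simp: projections_rank_def selfadjoints_def)

definition cinner :: "complex^'n \<Rightarrow> complex^'n \<Rightarrow> complex" where
  "cinner u w = (\<Sum>m\<in>UNIV. cnj (u $ m) * w $ m)"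

lemma cinner_commute: "cinner w u = cnj (cinner u w)"
  by (simp add: cinner_def cnj_sum mult.commute)

lemma cinner_scale_left: "cinner (a *s u) w = cnj a * cinner u w"
  by (simp add: cinner_def sum_distrib_left mult.assoc)

lemma cinner_add_left: "cinner (u + v) w = cinner u w + cinner v w"
  by (simp add: cinner_def sum.distrib distrib_right)

lemma cinner_axis_left: "cinner (axis a 1) w = w $ a"
proof -
  have "cinner (axis a 1) w = (\<Sum>m\<in>UNIV. if m = a then w $ m else 0)"
    unfolding cinner_def by (intro sum.cong) (auto simp: axis_def)
  then show ?thesis by simp
qed

definition orthonormal :: "(complex^'n) set \<Rightarrow> bool" where
  "orthonormal W \<longleftrightarrow> (\<forall>u\<in>W. \<forall>w\<in>W. cinner u w = (if u = w then 1 else 0))"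

lemma inj_on_axis_one: "inj_on (\<lambda>i. axis i (1::complex)) X"
  by (auto simp: inj_on_def axis_eq_axis)

lemma card_axis_image: "card ((\<lambda>i. axis i (1::complex)) ` X) = card X"
  using inj_on_axis_one by (rule card_image)

lemma orthonormal_axis_image: "orthonormal ((\<lambda>i. axis i 1) ` X)"
  unfolding orthonormal_def by (simp add: cinner_axis_left axis_eq_axis) (simp add: axis_def)

lemma orthonormal_insert:
  assumes "orthonormal W" "cinner w w = 1" "\<And>u. u \<in> W \<Longrightarrow> cinner u w = 0"
  shows "orthonormal (insert w W)"
proof -
  have "cinner w u = 0" if "u \<in> W" for u
    using assms(3)[OF that] cinner_commute[of w u] by simp
  then show ?thesis using assms by (auto simp: orthonormal_def)
qed

lemma orthonormal_sum_cinner: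
  assumes "finite W" "orthonormal W" "v \<in> W"
  shows "(\<Sum>w\<in>W. c w * cinner v w) = c v" "(\<Sum>w\<in>W. c w * cinner w v) = c v"
proof -
  have "(\<Sum>w\<in>W. c w * cinner v w) = (\<Sum>w\<in>W. if v = w then c w else 0)"
    "(\<Sum>w\<in>W. c w * cinner w v) = (\<Sum>w\<in>W. if v = w then c w else 0)"
    using assms(2,3) by (auto intro!: sum.cong simp: orthonormal_def)
  then show "(\<Sum>w\<in>W. c w * cinner v w) = c v" "(\<Sum>w\<in>W. c w * cinner w v) = c v"
    using assms(1,3) by simp_all
qed

lemma orthonormal_imp_independent:
  assumes "finite W" "orthonormal W"
  shows "vec.independent W"
proof
  assume "vec.dependent W"
  then obtain c v where v: "v \<in> W" "c v \<noteq> 0" and s: "(\<Sum>w\<in>W. c w *s w) = 0"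
    using vec.dependent_finite[OF assms(1)] by blast
  have "0 = cinner v (\<Sum>w\<in>W. c w *s w)" by (simp add: s cinner_def)
  also have "\<dots> = (\<Sum>w\<in>W. c w * cinner v w)"
    unfolding cinner_def
    by (simp add: sum_component sum_distrib_left mult.left_commute) (rule sum.swap)
  also have "\<dots> = c v" using assms v(1) by (rule orthonormal_sum_cinner)
  finally show False using v(2) by simp
qed

text \<open>For orthonormal \<open>W\<close>, \<open>x \<mapsto> x v* proj_matrix W\<close> is the orthogonal projection onto the
  span of \<open>W\<close> (acting on columns it projects onto the span of the conjugate vectors).\<close>

definition proj_matrix :: "(complex^'n) set \<Rightarrow> complex^'n^'n" where
  "proj_matrix W = (\<chi> i j. \<Sum>w\<in>W. cnj (w $ i) * w $ j)"

lemma cadjoint_proj_matrix: "cadjoint (proj_matrix W) = proj_matrix W"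
  by (simp add: cadjoint_def proj_matrix_def vec_eq_iff cnj_sum mult.commute)

lemma proj_matrix_idempotent:
  assumes "finite W" "orthonormal W"
  shows "proj_matrix W ** proj_matrix W = proj_matrix W"
proof -
  have "(\<Sum>m\<in>UNIV. (\<Sum>w\<in>W. cnj (w$i) * w$m) * (\<Sum>u\<in>W. cnj (u$m) * u$j))
      = (\<Sum>w\<in>W. cnj (w$i) * w$j)" for i j
  proof -
    have "(\<Sum>m\<in>UNIV. (\<Sum>w\<in>W. cnj (w$i) * w$m) * (\<Sum>u\<in>W. cnj (u$m) * u$j))
        = (\<Sum>m\<in>UNIV. \<Sum>w\<in>W. \<Sum>u\<in>W. cnj (w$i) * (u$j * (cnj (u$m) * w$m)))"
      by (simp add: sum_product mult_ac)
    also have "\<dots> = (\<Sum>w\<in>W. \<Sum>u\<in>W. \<Sum>m\<in>UNIV. cnj (w$i) * (u$j * (cnj (u$m) * w$m)))"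
      by (subst sum.swap) (simp only: sum.swap[of _ UNIV])
    also have "\<dots> = (\<Sum>w\<in>W. cnj (w$i) * (\<Sum>u\<in>W. u$j * cinner u w))"
      by (simp add: cinner_def sum_distrib_left)
    also have "\<dots> = (\<Sum>w\<in>W. cnj (w$i) * w$j)"
      using assms by (simp add: orthonormal_sum_cinner)
    finally show ?thesis .
  qed
  then show ?thesis by (simp add: proj_matrix_def matrix_matrix_mult_def vec_eq_iff)
qed

lemma rank_proj_matrix:
  assumes "finite W" "orthonormal W"
  shows "rank (proj_matrix W) = card W"
proof -
  have row: "row i (proj_matrix W) = (\<Sum>w\<in>W. cnj (w$i) *s w)" for i
    by (simp add: row_def proj_matrix_def vec_eq_iff sum_component)
  have rows_in: "rows (proj_matrix W) \<subseteq> vec.span W"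
    unfolding rows_def row by (auto intro!: vec.span_sum vec.span_scale simp: vec.span_base)
  have W_in: "W \<subseteq> vec.span (rows (proj_matrix W))"
  proof
    fix v assume v: "v \<in> W"
    have "(\<Sum>i\<in>UNIV. v$i * (\<Sum>w\<in>W. cnj (w$i) * w$j)) = (\<Sum>w\<in>W. w$j * cinner w v)" for j
      unfolding cinner_def
      by (simp add: sum_distrib_left sum_distrib_right mult.left_commute mult.commute)
         (rule sum.swap)
    then have "v = (\<Sum>i\<in>UNIV. (v$i) *s row i (proj_matrix W))"
      using orthonormal_sum_cinner(2)[OF assms v]
      by (simp add: vec_eq_iff sum_component row_def proj_matrix_def)
    also have "\<dots> \<in> vec.span (rows (proj_matrix W))"
      by (intro vec.span_sum vec.span_scale vec.span_base) (auto simp: rows_def)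
    finally show "v \<in> vec.span (rows (proj_matrix W))" .
  qed
  have "rank (proj_matrix W) = vec.dim (rows (proj_matrix W))" by (simp add: row_rank_def_gen)
  also have "\<dots> = vec.dim W"
    using rows_in W_in by (intro vec.span_eq_dim) (simp add: vec.span_eq)
  also have "\<dots> = card W"
    using orthonormal_imp_independent[OF assms] by (rule vec.dim_eq_card_independent)
  finally show ?thesis .
qed

lemma proj_matrix_in_projections_rank:
  assumes "finite W" "orthonormal W"
  shows "proj_matrix W \<in> projections_rank (card W)"
  using assms cadjoint_proj_matrix proj_matrix_idempotent rank_proj_matrix
  unfolding projections_rank_def by auto

lemma proj_matrix_union:
  assumes "finite A" "finite B" "A \<inter> B = {}"
  shows "proj_matrix (A \<union> B) = proj_matrix A + proj_matrix B"
  using assms by (simp add: proj_matrix_def vec_eq_iff sum.union_disjoint)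

definition matrix_unit :: "'n \<Rightarrow> 'n \<Rightarrow> complex^'n^'n" where
  "matrix_unit i j = (\<chi> p q. if p = i \<and> q = j then 1 else 0)"

lemma proj_matrix_axis_image:
  "proj_matrix ((\<lambda>i. axis i 1) ` X) = (\<Sum>t\<in>X. matrix_unit t t)"
proof -
  have "(\<Sum>w\<in>(\<lambda>i. axis i 1) ` X. cnj (w $ p) * w $ q) = (\<Sum>t\<in>X. matrix_unit t t $ p $ q)"
    for p q
    by (simp add: sum.reindex[OF inj_on_axis_one]) (auto simp: matrix_unit_def axis_def intro!: sum.cong)
  then show ?thesis by (simp add: proj_matrix_def vec_eq_iff sum_component)
qed

lemma sum_matrix_units_in_projections_rank:
  "(\<Sum>t\<in>X. matrix_unit t t) \<in> projections_rank (card X)"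
  using proj_matrix_in_projections_rank[OF _ orthonormal_axis_image, of X]
  by (simp add: proj_matrix_axis_image card_axis_image)

lemma obtain_card_subset_avoiding:
  fixes i j :: "'n::finite"
  assumes "1 \<le> k" "k < CARD('n)"
  obtains T where "card T = k - 1" "i \<notin> T" "j \<notin> T"
proof -
  have "card {i, j} \<le> 2" by (simp add: card_insert_if)
  then have "k - 1 \<le> card (UNIV - {i, j})" using assms by (simp add: card_Diff_subset)
  then obtain T where "T \<subseteq> UNIV - {i, j}" "card T = k - 1"
    by (metis obtain_subset_with_card_n)
  then show thesis using that by blast
qed

lemma matrix_unit_diff_in_span:
  fixes i j :: "'n::finite"
  assumes "1 \<le> k" "k < CARD('n)"
  shows "matrix_unit i i - matrix_unit j j \<in> span (projections_rank k :: (complex^'n^'n) set)"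
proof -
  obtain T where T: "card T = k - 1" "i \<notin> T" "j \<notin> T"
    using obtain_card_subset_avoiding[OF assms] .
  have "(\<Sum>t\<in>insert i T. matrix_unit t t) - (\<Sum>t\<in>insert j T. matrix_unit t t)
      \<in> span (projections_rank k)"
    using sum_matrix_units_in_projections_rank[of "insert i T"]
      sum_matrix_units_in_projections_rank[of "insert j T"] T assms(1)
    by (intro span_diff span_base) auto
  then show ?thesis using T by simp
qed

lemma matrix_unit_in_span:
  fixes i :: "'n::finite"
  assumes "1 \<le> k" "k < CARD('n)"
  shows "matrix_unit i i \<in> span (projections_rank k :: (complex^'n^'n) set)"
proof -
  obtain T where T: "card T = k - 1" "i \<notin> T"
    using obtain_card_subset_avoiding[OF assms, of i i] by blast
  have diag: "(\<Sum>t\<in>insert i T. matrix_unit t t) \<in> span (projections_rank k)"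
    using sum_matrix_units_in_projections_rank[of "insert i T"] T assms(1)
    by (intro span_base) auto
  have diffs: "(\<Sum>t\<in>T. matrix_unit t t - matrix_unit i i) \<in> span (projections_rank k)"
    by (intro span_sum matrix_unit_diff_in_span assms)
  have "(\<Sum>t\<in>insert i T. matrix_unit t t) - (\<Sum>t\<in>T. matrix_unit t t - matrix_unit i i)
      = (1 + real (card T)) *\<^sub>R matrix_unit i i"
    using T sum_constant_scaleR[of "matrix_unit i i" T]
    by (simp add: sum_subtractf scaleR_add_left del: sum_constant)
  also have "1 + real (card T) = real k" using T assms(1) by simp
  finally have "real k *\<^sub>R matrix_unit i i \<in> span (projections_rank k)"
    using span_diff[OF diag diffs] by simp
  then have "inverse (real k) *\<^sub>R real k *\<^sub>R matrix_unit i i \<in> span (projections_rank k)"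
    by (rule span_scale)
  then show ?thesis using assms(1) by simp
qed

lemma proj_matrix_two_coordinates_in_span:
  fixes i j :: "'n::finite"
  assumes "1 \<le> k" "k < CARD('n)"
    and "cinner w w = 1" and "\<And>t. t \<noteq> i \<Longrightarrow> t \<noteq> j \<Longrightarrow> w $ t = 0"
  shows "proj_matrix {w} \<in> span (projections_rank k :: (complex^'n^'n) set)"
proof -
  obtain T where T: "card T = k - 1" "i \<notin> T" "j \<notin> T"
    using obtain_card_subset_avoiding[OF assms(1,2)] .
  let ?E = "(\<lambda>t. axis t 1) ` T"
  have w_notin: "w \<notin> ?E"
  proof
    assume "w \<in> ?E"
    then obtain t where "t \<in> T" "w = axis t 1" by auto
    then show False using assms(4)[of t] T by (auto simp: axis_def)
  qed
  have "orthonormal (insert w ?E)"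
  proof (rule orthonormal_insert[OF orthonormal_axis_image assms(3)])
    fix u :: "complex^'n" assume "u \<in> ?E"
    then obtain t where "t \<in> T" "u = axis t 1" by auto
    then show "cinner u w = 0" using T by (auto simp: cinner_axis_left intro: assms(4))
  qed
  moreover have "card (insert w ?E) = k"
    using w_notin T assms(1) by (simp add: card_axis_image)
  ultimately have "proj_matrix (insert w ?E) \<in> span (projections_rank k)"
    using proj_matrix_in_projections_rank[of "insert w ?E"] by (simp add: span_base)
  moreover have "proj_matrix (insert w ?E) = proj_matrix {w} + (\<Sum>t\<in>T. matrix_unit t t)"
    using proj_matrix_union[of "{w}" ?E] w_notin by (simp add: proj_matrix_axis_image)
  moreover have "(\<Sum>t\<in>T. matrix_unit t t) \<in> span (projections_rank k)"
    by (intro span_sum matrix_unit_in_span assms(1,2))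
  ultimately show ?thesis
    using span_diff by fastforce
qed

definition hermitian_unit :: "'n \<Rightarrow> 'n \<Rightarrow> complex \<Rightarrow> complex^'n^'n" where
  "hermitian_unit i j z =
    (\<chi> p q. (if p = i \<and> q = j then z / 2 else 0) + (if p = j \<and> q = i then cnj z / 2 else 0))"

lemma normalized_axis_pair:
  fixes i j :: "'n::finite"
  assumes "i \<noteq> j" "cmod z = 1"
  defines "w \<equiv> complex_of_real (sqrt (1/2)) *s (axis i 1 + z *s axis j 1)"
  shows "cinner w w = 1"
    and "proj_matrix {w} = (1/2::real) *\<^sub>R (matrix_unit i i + matrix_unit j j) + hermitian_unit i j z"
proof -
  define c where "c = complex_of_real (sqrt (1/2))"
  have c: "cnj c = c" "c * c = 1/2"
    by (simp_all add: c_def flip: of_real_mult)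
  have z: "cnj z * z = 1"
    using assms(2) complex_norm_square[of z] by (simp add: mult.commute)
  have w: "w $ t = (if t = i then c else if t = j then c * z else 0)" for t
    using assms(1) by (simp add: w_def c_def axis_def)
  have "cinner w w = cinner (c *s (axis i 1 + z *s axis j 1)) w"
    by (simp add: w_def c_def)
  also have "\<dots> = cnj c * (w $ i + cnj z * w $ j)"
    by (simp only: cinner_scale_left cinner_add_left cinner_axis_left)
  also have "\<dots> = c * c * (1 + cnj z * z)"
    using assms(1) by (simp add: w c(1) algebra_simps)
  finally show "cinner w w = 1"
    by (simp add: c(2) z)
  have half: "(1/2::real) *\<^sub>R (1::complex) = c * c"
    using c(2) by (simp add: scaleR_conv_of_real)
  have "proj_matrix {w} $ p $ q = ((1/2::real) *\<^sub>R (matrix_unit i i + matrix_unit j j)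
      + hermitian_unit i j z) $ p $ q" for p q
    using assms(1) c z
    by (cases "p = i"; cases "q = j"; cases "p = j"; cases "q = i")
      (simp_all add: proj_matrix_def hermitian_unit_def matrix_unit_def w half algebra_simps)
  then show "proj_matrix {w} = (1/2::real) *\<^sub>R (matrix_unit i i + matrix_unit j j)
      + hermitian_unit i j z"
    by (simp add: vec_eq_iff)
qed

lemma hermitian_unit_unimodular_in_span:
  fixes i j :: "'n::finite"
  assumes "1 \<le> k" "k < CARD('n)" "i \<noteq> j" "cmod z = 1"
  shows "hermitian_unit i j z \<in> span (projections_rank k :: (complex^'n^'n) set)"
proof -
  define w :: "complex^'n" where "w = complex_of_real (sqrt (1/2)) *s (axis i 1 + z *s axis j 1)"
  have "proj_matrix {w} \<in> span (projections_rank k)"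
    using normalized_axis_pair(1)[OF assms(3,4)] assms(3)
    by (intro proj_matrix_two_coordinates_in_span[OF assms(1,2), where i = i and j = j])
      (simp_all add: w_def axis_def)
  moreover have "(1/2::real) *\<^sub>R (matrix_unit i i + matrix_unit j j) \<in> span (projections_rank k)"
    by (intro span_scale span_add matrix_unit_in_span assms(1,2))
  ultimately show ?thesis
    using normalized_axis_pair(2)[OF assms(3,4)] span_diff unfolding w_def
    by (metis add_diff_cancel_left')
qed

lemma hermitian_unit_in_span:
  fixes i j :: "'n::finite"
  assumes "1 \<le> k" "k < CARD('n)"
  shows "hermitian_unit i j z \<in> span (projections_rank k :: (complex^'n^'n) set)"
proof (cases "i = j")
  case True
  then have "hermitian_unit i j z = Re z *\<^sub>R matrix_unit i i"
    by (simp add: hermitian_unit_def matrix_unit_def vec_eq_iff complex_eq_iff)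
  then show ?thesis by (simp only:) (intro span_scale matrix_unit_in_span assms)
next
  case False
  have "hermitian_unit i j z $ p $ q
      = (Re z *\<^sub>R hermitian_unit i j 1 + Im z *\<^sub>R hermitian_unit i j \<i>) $ p $ q" for p q
    by (cases "p = i"; cases "q = j"; cases "p = j"; cases "q = i")
      (simp_all add: hermitian_unit_def complex_eq_iff)
  then have "hermitian_unit i j z = Re z *\<^sub>R hermitian_unit i j 1 + Im z *\<^sub>R hermitian_unit i j \<i>"
    by (simp add: vec_eq_iff)
  then show ?thesis
    by (simp only:) (intro span_add span_scale hermitian_unit_unimodular_in_span assms False; simp)
qed

lemma sum_sum_delta:
  fixes p q :: "'n::finite" and f :: "'n \<Rightarrow> 'n \<Rightarrow> 'a::comm_monoid_add"
  shows "(\<Sum>i\<in>UNIV. \<Sum>j\<in>UNIV. if p = i \<and> q = j then f i j else 0) = f p q"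
    and "(\<Sum>i\<in>UNIV. \<Sum>j\<in>UNIV. if p = j \<and> q = i then f i j else 0) = f q p"
proof -
  have "(\<Sum>i\<in>UNIV. \<Sum>j\<in>UNIV. if p = i \<and> q = j then f i j else 0)
      = (\<Sum>i\<in>UNIV. if p = i then f i q else 0)"
    by (intro sum.cong) (auto simp: if_distrib sum.delta' cong: if_cong)
  then show "(\<Sum>i\<in>UNIV. \<Sum>j\<in>UNIV. if p = i \<and> q = j then f i j else 0) = f p q"
    by simp
  have "(\<Sum>i\<in>UNIV. \<Sum>j\<in>UNIV. if p = j \<and> q = i then f i j else 0)
      = (\<Sum>i\<in>UNIV. if q = i then f i p else 0)"
    by (intro sum.cong) (auto simp: if_distrib sum.delta' cong: if_cong)
  then show "(\<Sum>i\<in>UNIV. \<Sum>j\<in>UNIV. if p = j \<and> q = i then f i j else 0) = f q p"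
    by simp
qed

lemma sum_hermitian_units:
  assumes "A \<in> selfadjoints"
  shows "(\<Sum>i\<in>UNIV. \<Sum>j\<in>UNIV. hermitian_unit i j (A $ i $ j)) = A"
proof -
  have sa: "cadjoint A = A" using assms by (simp add: selfadjoints_def)
  have adj: "A $ q $ p = cnj (A $ p $ q)" for p q
    using arg_cong[OF sa, of "\<lambda>B. B $ q $ p"] by (simp add: cadjoint_def)
  have "(\<Sum>i\<in>UNIV. \<Sum>j\<in>UNIV. hermitian_unit i j (A $ i $ j)) $ p $ q = A $ p $ q" for p q
  proof -
    have "(\<Sum>i\<in>UNIV. \<Sum>j\<in>UNIV. hermitian_unit i j (A $ i $ j)) $ p $ q
        = A $ p $ q / 2 + cnj (A $ q $ p) / 2"
      unfolding hermitian_unit_def sum_component vec_lambda_beta sum.distrib sum_sum_delta ..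
    also have "\<dots> = A $ p $ q" using adj[of p q] by simp
    finally show ?thesis .
  qed
  then show ?thesis by (simp add: vec_eq_iff)
qed

lemma selfadjoints_subset_span_projections_rank:
  assumes "1 \<le> k" "k < CARD('n)"
  shows "(selfadjoints :: (complex^'n^'n) set) \<subseteq> span (projections_rank k)"
proof
  fix A :: "complex^'n^'n"
  assume "A \<in> selfadjoints"
  then have "A = (\<Sum>i\<in>UNIV. \<Sum>j\<in>UNIV. hermitian_unit i j (A $ i $ j))"
    by (simp add: sum_hermitian_units)
  also have "\<dots> \<in> span (projections_rank k)"
    by (intro span_sum hermitian_unit_in_span assms)
  finally show "A \<in> span (projections_rank k)" .
qed

definition hermitian_part :: "complex^'n^'n \<Rightarrow> complex^'n^'n" where
  "hermitian_part A = (1/2::real) *\<^sub>R (A + cadjoint A)"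

lemma linear_hermitian_part: "linear hermitian_part"
  by (rule linearI) (simp_all add: hermitian_part_def cadjoint_add cadjoint_scaleR algebra_simps)

lemma hermitian_part_in_selfadjoints: "hermitian_part A \<in> selfadjoints"
  by (simp add: hermitian_part_def selfadjoints_def cadjoint_add cadjoint_scaleR add.commute)

lemma hermitian_part_selfadjoint: "A \<in> selfadjoints \<Longrightarrow> hermitian_part A = A"
  by (simp add: hermitian_part_def selfadjoints_def scaleR_add_right[symmetric])

lemma linear_comp_hermitian_part:
  assumes "\<And>A B. A \<in> selfadjoints \<Longrightarrow> B \<in> selfadjoints \<Longrightarrow> L (A + B) = L A + L B"
    and "\<And>(c::real) A. A \<in> selfadjoints \<Longrightarrow> L (c *\<^sub>R A) = c *\<^sub>R L A"
  shows "linear (L \<circ> hermitian_part)"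
  by (rule linearI) (simp_all add: linear_add[OF linear_hermitian_part]
      linear_scale[OF linear_hermitian_part] assms hermitian_part_in_selfadjoints)

theorem lemma2:
  fixes L :: "complex^'n^'n \<Rightarrow> complex^'n^'n" and k :: nat
  assumes "CARD('n) \<ge> 2"
    and "1 \<le> k" and "k < CARD('n)"
    and "L ` selfadjoints \<subseteq> selfadjoints"
    and "\<And>A B. A \<in> selfadjoints \<Longrightarrow> B \<in> selfadjoints \<Longrightarrow> L (A + B) = L A + L B"
    and "\<And>(c::real) A. A \<in> selfadjoints \<Longrightarrow> L (c *\<^sub>R A) = c *\<^sub>R L A"
    and "L ` projections_rank k = projections_rank k"
  shows "bij_betw L selfadjoints selfadjoints"
proof -
  define g where "g = L \<circ> hermitian_part"
  have lin: "linear g"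
    unfolding g_def using assms(5,6) by (rule linear_comp_hermitian_part)
  have g_eq: "g A = L A" if "A \<in> selfadjoints" for A
    using that by (simp add: g_def hermitian_part_selfadjoint)
  have g_image: "g ` X = L ` X" if "X \<subseteq> selfadjoints" for X
    using that g_eq by (intro image_cong) auto
  have "(selfadjoints :: (complex^'n^'n) set) \<subseteq> span (projections_rank k)"
    using assms(2,3) by (rule selfadjoints_subset_span_projections_rank)
  also have "\<dots> = span (g ` projections_rank k)"
    by (simp add: g_image projections_rank_subset_selfadjoints assms(7))
  also have "\<dots> = g ` span (projections_rank k)"
    using lin by (rule span_linear_image)
  also have "\<dots> \<subseteq> g ` selfadjoints"
    by (intro image_mono span_minimal projections_rank_subset_selfadjoints subspace_selfadjoints)
  finally have onto: "L ` selfadjoints = selfadjoints"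
    using assms(4) g_image[of selfadjoints] by simp
  have "inj_on g selfadjoints"
    using lin subspace_selfadjoints onto g_image[of selfadjoints]
    by (intro linear_surjective_on_subspace_imp_inj_on) simp_all
  then have "inj_on L selfadjoints"
    using g_eq inj_on_cong by blast
  with onto show ?thesis by (simp add: bij_betw_def)
qed

end
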